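(* Let $\mathcal C=(C,\chi,\ell)$ be a simplicial model, $X\in C$ any simplex, and $\varphi\in\mathcal L_K(\chi(X),P|\chi(X))$, where $P|\chi(X)=\bigcup_{a\in\chi(X)}P_a$. Then $\mathcal C,X\models_{lr}\varphi$ iff $\mathcal C,X\models_{mp}\varphi$.
   Context: Fix a finite set $A$ of agents and pairwise disjoint sets $P_a$ ($a\in A$) of local variables, with $P=\bigcup_{a\in A}P_a$. A simplicial complex $C$ on vertex set $\mathcal V(C)$ is a set of nonempty finite subsets (simplices) of $\mathcal V(C)$ closed under nonempty subsets and containing all singletons; maximal simplices are facets, $\mathcal F(C)$. A simplicial model $\mathcal C=(C,\chi,\ell)$ consists of such $C$, a colouring $\chi:\mathcal V(C)\to A$ such that every facet contains exactly one vertex of each colour, and $\ell:\mathcal V(C)\to\mathcal P(P)$ with $\ell(v)\subseteq P_{\chi(v)}$. For a simplex $X$: $\chi(X)=\{\chi(v):v\in X\}$, $\ell(X)=\bigcup_{v\in X}\ell(v)$. For $B\subseteq A$ and $Q\subseteq P$, $\mathcal L_K(B,Q)$ is given by $\varphi::=p\mid\neg\varphi\mid\varphi\wedge\varphi\mid K_a\varphi$ with $p\in Q$, $a\in B$. Facet semantics: $\mathcal C,X\models p$ iff $p\in\ell(X)$; negation, conjunction classical; $\mathcal C,X\models K_a\varphi$ iff $\mathcal C,Y\models\varphi$ for all $Y\in\mathcal F(C)$ with $a\in\chi(X\cap Y)$. Multi-pointed local semantics: for any simplex $Y\in C$, $\mathcal C,Y\models_{mp}\varphi$ iff $\mathcal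 C,Z\models\varphi$ (facet semantics) for all facets $Z\in\mathcal F(C)$ with $Y\subseteq Z$. Language-restricted local semantics: for a simplex $X$ and $\varphi\in\mathcal L_K(\chi(X),P|\chi(X))$, defined by induction: $\mathcal C,X\models_{lr}p_a$ iff $p_a\in\ell(X)$; $\neg$ and $\wedge$ classical; $\mathcal C,X\models_{lr}K_a\varphi$ iff $\mathcal C,Y\models_{lr}\varphi$ for all simplices $Y\in C$ with $\chi(Y)=\chi(X)$ and $a\in\chi(X\cap Y)$. *)

theory Defs
  imports Main
begin

datatype ('a, 'p) form =
    Atom 'p
  | Neg "('a, 'p) form"
  | Conj "('a, 'p) form" "('a, 'p) form"
  | K 'a "('a, 'p) form"

fun in_lang :: "'a set \<Rightarrow> 'p set \<Rightarrow> ('a, 'p) form \<Rightarrow> bool" where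
  "in_lang B Q (Atom p) = (p \<in> Q)"
| "in_lang B Q (Neg \<phi>) = in_lang B Q \<phi>"
| "in_lang B Q (Conj \<phi> \<psi>) = (in_lang B Q \<phi> \<and> in_lang B Q \<psi>)"
| "in_lang B Q (K a \<phi>) = (a \<in> B \<and> in_lang B Q \<phi>)"

definition simplicial_complex :: "'v set \<Rightarrow> 'v set set \<Rightarrow> bool" where
  "simplicial_complex V C \<longleftrightarrow>
     (\<forall>X\<in>C. X \<noteq> {} \<and> finite X \<and> X \<subseteq> V) \<and>
     (\<forall>X\<in>C. \<forall>Y. Y \<noteq> {} \<and> Y \<subseteq> X \<longrightarrow> Y \<in> C) \<and>
     (\<forall>v\<in>V. {v} \<in> C)"

definition facets :: "'v set set \<Rightarrow> 'v set set" where
  "facets C = {X \<in> C. \<forall>Y\<in>C. X \<subseteq> Y \<longrightarrow> Y = X}"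

definition simplicial_model ::
  "'a set \<Rightarrow> ('a \<Rightarrow> 'p set) \<Rightarrow> 'v set \<Rightarrow> 'v set set \<Rightarrow> ('v \<Rightarrow> 'a) \<Rightarrow> ('v \<Rightarrow> 'p set) \<Rightarrow> bool" where
  "simplicial_model A Pa V C \<chi> lbl \<longleftrightarrow>
     finite A \<and>
     (\<forall>a\<in>A. \<forall>b\<in>A. a \<noteq> b \<longrightarrow> Pa a \<inter> Pa b = {}) \<and>
     simplicial_complex V C \<and>
     (\<forall>v\<in>V. \<chi> v \<in> A) \<and>
     (\<forall>F\<in>facets C. \<forall>a\<in>A. \<exists>!v. v \<in> F \<and> \<chi> v = a) \<and>
     (\<forall>v\<in>V. lbl v \<subseteq> Pa (\<chi> v))"

definition lab :: "('v \<Rightarrow> 'p set) \<Rightarrow> 'v set \<Rightarrow> 'p set" where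
  "lab lbl X = (\<Union>v\<in>X. lbl v)"

fun sat_f :: "'v set set \<Rightarrow> ('v \<Rightarrow> 'a) \<Rightarrow> ('v \<Rightarrow> 'p set) \<Rightarrow> 'v set \<Rightarrow> ('a, 'p) form \<Rightarrow> bool" where
  "sat_f C \<chi> lbl X (Atom p) = (p \<in> lab lbl X)"
| "sat_f C \<chi> lbl X (Neg \<phi>) = (\<not> sat_f C \<chi> lbl X \<phi>)"
| "sat_f C \<chi> lbl X (Conj \<phi> \<psi>) = (sat_f C \<chi> lbl X \<phi> \<and> sat_f C \<chi> lbl X \<psi>)"
| "sat_f C \<chi> lbl X (K a \<phi>) =
     (\<forall>Y\<in>facets C. a \<in> \<chi> ` (X \<inter> Y) \<longrightarrow> sat_f C \<chi> lbl Y \<phi>)"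

definition sat_mp :: "'v set set \<Rightarrow> ('v \<Rightarrow> 'a) \<Rightarrow> ('v \<Rightarrow> 'p set) \<Rightarrow> 'v set \<Rightarrow> ('a, 'p) form \<Rightarrow> bool" where
  "sat_mp C \<chi> lbl Y \<phi> \<longleftrightarrow> (\<forall>Z\<in>facets C. Y \<subseteq> Z \<longrightarrow> sat_f C \<chi> lbl Z \<phi>)"

text \<open>Language-restricted local semantics (meaningful for formulas of
  L_K(chi(X), P|chi(X)); defined totally by the same clauses).\<close>
fun sat_lr :: "'v set set \<Rightarrow> ('v \<Rightarrow> 'a) \<Rightarrow> ('v \<Rightarrow> 'p set) \<Rightarrow> 'v set \<Rightarrow> ('a, 'p) form \<Rightarrow> bool" where
  "sat_lr C \<chi> lbl X (Atom p) = (p \<in> lab lbl X)"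
| "sat_lr C \<chi> lbl X (Neg \<phi>) = (\<not> sat_lr C \<chi> lbl X \<phi>)"
| "sat_lr C \<chi> lbl X (Conj \<phi> \<psi>) = (sat_lr C \<chi> lbl X \<phi> \<and> sat_lr C \<chi> lbl X \<psi>)"
| "sat_lr C \<chi> lbl X (K a \<phi>) =
     (\<forall>Y\<in>C. \<chi> ` Y = \<chi> ` X \<and> a \<in> \<chi> ` (X \<inter> Y) \<longrightarrow> sat_lr C \<chi> lbl Y \<phi>)"

end

theory Submission
  imports Defs
begin

text \<open>
  Strengthen the statement to: for every simplex Y with colours B and every facet Z
  containing Y, a formula of L_K(B, P|B) holds at Y in the language-restricted semantics iff
  it holds at Z in the facet semantics.
  An atom of an agent b \<in> B can only be carried by a vertex of colour b, and the unique
  such vertex of Z lies in Y. For K a, the simplices with colours B sharing colour a with Y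
  are exactly the restrictions to B of the facets sharing colour a with Z, because Z has a
  single vertex of colour a (and every simplex lies in some facet).
\<close>

context
  fixes A Pa V C \<chi> lbl
  assumes model: "simplicial_model A Pa V C \<chi> lbl"
begin

lemma model_complex: "simplicial_complex V C"
  and model_colours: "\<forall>v\<in>V. \<chi> v \<in> A"
  and model_facet_colours: "\<forall>F\<in>facets C. \<forall>a\<in>A. \<exists>!v. v \<in> F \<and> \<chi> v = a"
  and model_labels: "\<forall>v\<in>V. lbl v \<subseteq> Pa (\<chi> v)"
  and model_disjoint: "\<forall>a\<in>A. \<forall>b\<in>A. a \<noteq> b \<longrightarrow> Pa a \<inter> Pa b = {}"
  using model by (simp_all add: simplicial_model_def)

lemma simplex_subset_vertices: "Y \<in> C \<Longrightarrow> Y \<subseteq> V"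
  using model_complex unfolding simplicial_complex_def by blast

lemma face_in_complex: "X \<in> C \<Longrightarrow> Y \<noteq> {} \<Longrightarrow> Y \<subseteq> X \<Longrightarrow> Y \<in> C"
  using model_complex unfolding simplicial_complex_def by blast

lemma facet_in_complex: "F \<in> facets C \<Longrightarrow> F \<in> C"
  by (simp add: facets_def)

lemma colours_of_simplex: "Y \<in> C \<Longrightarrow> \<chi> ` Y \<subseteq> A"
  using model_colours simplex_subset_vertices by blast

lemma facet_colour_ex1: "F \<in> facets C \<Longrightarrow> a \<in> A \<Longrightarrow> \<exists>!v. v \<in> F \<and> \<chi> v = a"
  using model_facet_colours by blast

lemma facet_has_colour: "F \<in> facets C \<Longrightarrow> a \<in> A \<Longrightarrow> \<exists>v\<in>F. \<chi> v = a"
  using facet_colour_ex1 by blast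

lemma facet_colour_unique:
  assumes F: "F \<in> facets C" and "u \<in> F" "v \<in> F" "\<chi> u = \<chi> v"
  shows "u = v"
proof -
  have "\<chi> u \<in> A" using assms colours_of_simplex facet_in_complex by blast
  then show ?thesis using facet_colour_ex1[OF F] assms(2-) by metis
qed

lemma local_variable_colour:
  assumes "v \<in> V" "p \<in> lbl v" "b \<in> A" "p \<in> Pa b"
  shows "\<chi> v = b"
proof (rule ccontr)
  assume "\<chi> v \<noteq> b"
  moreover have "\<chi> v \<in> A" and "lbl v \<subseteq> Pa (\<chi> v)"
    using model_colours model_labels assms(1) by blast+
  ultimately have "Pa (\<chi> v) \<inter> Pa b = {}"
    using model_disjoint assms(3) by blast
  then show False using \<open>lbl v \<subseteq> Pa (\<chi> v)\<close> assms(2,4) by blast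
qed

lemma atom_in_facet_iff_atom_in_face:
  assumes Z: "Z \<in> facets C" and "Y \<subseteq> Z" and b: "b \<in> \<chi> ` Y" and p: "p \<in> Pa b"
  shows "p \<in> lab lbl Z \<longleftrightarrow> p \<in> lab lbl Y"
proof
  assume "p \<in> lab lbl Z"
  then obtain v where v: "v \<in> Z" "p \<in> lbl v" by (auto simp: lab_def)
  obtain w where w: "w \<in> Y" "\<chi> w = b" using b by blast
  have "b \<in> A"
    using w \<open>Y \<subseteq> Z\<close> Z facet_in_complex colours_of_simplex by blast
  moreover have "v \<in> V" using v(1) Z facet_in_complex simplex_subset_vertices by blast
  ultimately have "\<chi> v = b" using local_variable_colour v(2) p by blast
  then have "v = w" using facet_colour_unique[OF Z] v w \<open>Y \<subseteq> Z\<close> by blast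
  then show "p \<in> lab lbl Y" using v w by (auto simp: lab_def)
qed (use \<open>Y \<subseteq> Z\<close> in \<open>auto simp: lab_def\<close>)

lemma facet_restriction_to_colours:
  assumes W: "W \<in> facets C" and "B \<subseteq> A" "B \<noteq> {}"
  shows "{w \<in> W. \<chi> w \<in> B} \<in> C" and "\<chi> ` {w \<in> W. \<chi> w \<in> B} = B"
proof -
  show colours: "\<chi> ` {w \<in> W. \<chi> w \<in> B} = B"
  proof
    show "B \<subseteq> \<chi> ` {w \<in> W. \<chi> w \<in> B}"
    proof
      fix b assume "b \<in> B"
      then obtain w where "w \<in> W" "\<chi> w = b"
        using facet_has_colour[OF W, of b] \<open>B \<subseteq> A\<close> by blast
      with \<open>b \<in> B\<close> show "b \<in> \<chi> ` {w \<in> W. \<chi> w \<in> B}" by (auto intro: image_eqI)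
    qed
  qed blast
  have "{w \<in> W. \<chi> w \<in> B} \<noteq> {}"
  proof
    assume empty: "{w \<in> W. \<chi> w \<in> B} = {}"
    have "B = {}" using colours unfolding empty by simp
    with \<open>B \<noteq> {}\<close> show False ..
  qed
  then show "{w \<in> W. \<chi> w \<in> B} \<in> C"
    by (rule face_in_complex[OF facet_in_complex[OF W]]) blast
qed

lemma sat_lr_iff_sat_f_facet:
  assumes pure: "\<forall>Y\<in>C. \<exists>F\<in>facets C. Y \<subseteq> F"
    and "in_lang B (\<Union>b\<in>B. Pa b) \<phi>"
    and "Y \<in> C" "\<chi> ` Y = B" "Z \<in> facets C" "Y \<subseteq> Z"
  shows "sat_lr C \<chi> lbl Y \<phi> \<longleftrightarrow> sat_f C \<chi> lbl Z \<phi>"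
  using assms(2-)
proof (induction \<phi> arbitrary: Y Z)
  case (Atom p)
  then obtain b where "b \<in> \<chi> ` Y" "p \<in> Pa b" by auto
  then show ?case using atom_in_facet_iff_atom_in_face[OF Atom.prems(4,5)] by simp
next
  case (Neg \<phi>)
  show ?case using Neg.IH[OF _ Neg.prems(2-)] Neg.prems(1) by simp
next
  case (Conj \<phi>\<^sub>1 \<phi>\<^sub>2)
  show ?case
    using Conj.IH(1)[OF _ Conj.prems(2-)] Conj.IH(2)[OF _ Conj.prems(2-)] Conj.prems(1) by simp
next
  case (K a \<psi>)
  have a: "a \<in> B" and \<psi>: "in_lang B (\<Union>b\<in>B. Pa b) \<psi>"
    using K.prems(1) by simp_all
  have "B \<subseteq> A" using K.prems(2,3) colours_of_simplex by blast
  show ?case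
  proof
    assume lr: "sat_lr C \<chi> lbl Y (K a \<psi>)"
    show "sat_f C \<chi> lbl Z (K a \<psi>)"
    proof (unfold sat_f.simps, intro ballI impI)
      fix W assume W: "W \<in> facets C" "a \<in> \<chi> ` (Z \<inter> W)"
      define Y' where "Y' = {w \<in> W. \<chi> w \<in> B}"
      have "B \<noteq> {}" using a by blast
      then have Y': "Y' \<in> C" "\<chi> ` Y' = B"
        unfolding Y'_def using facet_restriction_to_colours[OF W(1) \<open>B \<subseteq> A\<close>] by blast+
      have "Y' \<subseteq> W" unfolding Y'_def by blast
      obtain v where v: "v \<in> Z" "v \<in> W" "\<chi> v = a" using W(2) by blast
      obtain u where u: "u \<in> Y" "\<chi> u = a" using a K.prems(3) by blast
      have "u = v" using facet_colour_unique[OF K.prems(4)] u v K.prems(5) by blast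
      then have "v \<in> Y \<inter> Y'" using u v a unfolding Y'_def by blast
      then have "a \<in> \<chi> ` (Y \<inter> Y')" using v(3) by blast
      moreover have "\<chi> ` Y' = \<chi> ` Y" using Y'(2) K.prems(3) by simp
      ultimately have "sat_lr C \<chi> lbl Y' \<psi>" using lr Y'(1) by simp
      then show "sat_f C \<chi> lbl W \<psi>"
        using K.IH[OF \<psi> Y' W(1) \<open>Y' \<subseteq> W\<close>] by simp
    qed
  next
    assume f: "sat_f C \<chi> lbl Z (K a \<psi>)"
    show "sat_lr C \<chi> lbl Y (K a \<psi>)"
    proof (unfold sat_lr.simps, intro ballI impI)
      fix Y' assume Y': "Y' \<in> C" "\<chi> ` Y' = \<chi> ` Y \<and> a \<in> \<chi> ` (Y \<inter> Y')"
      obtain W where W: "W \<in> facets C" "Y' \<subseteq> W" using pure Y'(1) by blast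
      have "a \<in> \<chi> ` (Z \<inter> W)" using Y'(2) W(2) K.prems(5) by blast
      then have "sat_f C \<chi> lbl W \<psi>" using f W(1) by simp
      moreover have "\<chi> ` Y' = B" using Y'(2) K.prems(3) by simp
      ultimately show "sat_lr C \<chi> lbl Y' \<psi>"
        using K.IH[OF \<psi> Y'(1) _ W] by simp
    qed
  qed
qed

end

theorem mainTheorem6:
  assumes "simplicial_model A Pa V C \<chi> lbl"
    and "\<forall>Y\<in>C. \<exists>F\<in>facets C. Y \<subseteq> F"
    and "X \<in> C"
    and "in_lang (\<chi> ` X) (\<Union>a\<in>\<chi> ` X. Pa a) \<phi>"
  shows "sat_lr C \<chi> lbl X \<phi> \<longleftrightarrow> sat_mp C \<chi> lbl X \<phi>"
proof -
  have facet_truth: "sat_lr C \<chi> lbl X \<phi> \<longleftrightarrow> sat_f C \<chi> lbl Z \<phi>"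
    if "Z \<in> facets C" "X \<subseteq> Z" for Z
    using sat_lr_iff_sat_f_facet[OF assms(1,2,4,3) refl that] .
  obtain F where "F \<in> facets C" "X \<subseteq> F" using assms(2,3) by blast
  then show ?thesis unfolding sat_mp_def using facet_truth by blast
qed

end
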